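(* Let $N_1=(S_1,A,L_1,AP,V_1,\{s_0^1\})$ and $N_2=(S_2,A,L_2,AP,V_2,\{s_0^2\})$ be deterministic APAs in SVNF with $N_1\not\preceq N_2$, and let $\mathcal R$ be their maximal refinement relation. For every pair $(s_1,s_2)\in S_1\times S_2$ in case 3 and every action $e\in(B_c(s_1,s_2)\cup B_f(s_1,s_2))\cap\mathrm{Breaking}(s_1,s_2)$, there exist constraints $\phi_1\in C(S_1)$, $\phi_2\in C(S_2)$ with $L_1(s_1,e,\phi_1)\ne\bot$ and $L_2(s_2,e,\phi_2)\ne\bot$, and a distribution $\mu_1\in Sat(\phi_1)$ such that at least one of the following holds: (1) there is $s_1'\in S_1$ with $\mu_1(s_1')>0$ and $\mathsf{succ}_{s_2,e}(s_1')=\emptyset$; (2) the function $\mu_1^2:S_2\to[0,1]$, $s_2'\mapsto\sum_{\{s_1'\in S_1\mid s_2'=\mathsf{succ}_{s_2,e}(s_1')\}}\mu_1(s_1')$, is not in $Sat(\phi_2)$; (3) there are $s_1'\in S_1$, $s_2'\in S_2$ with $\mu_1(s_1')>0$, $s_2'=\mathsf{succ}_{s_2,e}(s_1')$ and $\mathrm{ind}_{\mathcal R}(s_1',s_2')<\mathrm{ind}_{\mathcal R}(s_1,s_2)$.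
   Context: For a finite set $S$, $\mathrm{Dist}(S)$ is the set of probability distributions on $S$; $C(S)$ is a set of constraints, each $\phi\in C(S)$ determining $Sat(\phi)\subseteq\mathrm{Dist}(S)$. An APA is a tuple $N=(S,A,L,AP,V,S_0)$ with finite state set $S$, initial states $S_0\subseteq S$, finite action set $A$, finite set $AP$ of atomic propositions, $L:S\times A\times C(S)\to\{\top,?,\bot\}$ ($\top$: must, $?$: may, $\bot$: no transition) and $V:S\to 2^{2^{AP}}$. An APA is in SVNF if $|V(s)|\le1$ for all $s$; it is deterministic if it has exactly one initial state, for all $s,a$ at most one $\phi$ has $L(s,a,\phi)\ne\bot$, and for all $s,a,\phi$ with $L(s,a,\phi)\ne\bot$ and distinct states $s',s''$ with $V(s')\cap V(s'')\ne\emptyset$ there are no $\mu,\mu'\in Sat(\phi)$ with $\mu(s')>0$ and $\mu'(s'')>0$. For $\mu\in\mathrm{Dist}(S)$, $\mu'\in\mathrm{Dist}(S')$, $\mathcal Q\subseteq S\times S'$, $\mu\Subset_{\mathcal Q}\mu'$ means there is $\delta:S\to(S'\to[0,1])$ with $\delta(s)$ a distribution whenever $\mu(s)>0$, $\sum_s\mu(s)\delta(s)(s')=\mu'(s')$ for all $s'$, and $\delta(s)(s')>0\Rightarrow(s,s')\in\mathcal Q$. For $\mathcal Q\subseteq S_1\times S_2$, say a pair $(s_1,s_2)$ satisfies the refinement conditions w.r.t. $\mathcal Q$ if: $V_1(s_1)\subseteq V_2(s_2)$; whenever $L_2(s_2,a,\phi_2)=\top$ there is $\phi_1$ with $L_1(s_1,a,\phi_1)=\top$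 and every $\mu_1\in Sat(\phi_1)$ has some $\mu_2\in Sat(\phi_2)$ with $\mu_1\Subset_{\mathcal Q}\mu_2$; whenever $L_1(s_1,a,\phi_1)\ne\bot$ there is $\phi_2$ with $L_2(s_2,a,\phi_2)\ne\bot$ and every $\mu_1\in Sat(\phi_1)$ has some $\mu_2\in Sat(\phi_2)$ with $\mu_1\Subset_{\mathcal Q}\mu_2$. A refinement relation is a $\mathcal Q$ all of whose pairs satisfy the refinement conditions w.r.t. $\mathcal Q$; $N_1\preceq N_2$ if some refinement relation contains $(s_0^1,s_0^2)$. The maximal refinement relation $\mathcal R$ is the union of all refinement relations. For $N$ in SVNF, $\mathsf{succ}_{s,a}(v)=\{s'\mid V(s')=\{v\},\ \exists\phi\,\exists\mu\in Sat(\phi):L(s,a,\phi)\ne\bot,\mu(s')>0\}$; for deterministic $N$ this has at most one element, identified with that element (or $\emptyset$); for $s_1'\in S_1$ with $V_1(s_1')=\{v\}$, $\mathsf{succ}_{s_2,e}(s_1'):=\mathsf{succ}_{s_2,e}(v)$ computed in $N_2$. Iteration and index: $\mathcal R_0=S_1\times S_2$; $\mathcal R_{k+1}$ is the set of pairs of $\mathcal R_k$ that satisfy the refinement conditions w.r.t. $\mathcal R_k$. The sequence is decreasing and reaches a fixed point; let $\mathrm{ind}(\mathcal R)=K$ be the least index of the fixed point, so that $\mathcal R_K=\mathcal R$. For a pair, $\mathrm{ind}_{\mathcal R}(s_1,s_2)=\min(\max\{k\mid(s_1,s_2)\in\mathcal R_k\},K)$. Cases: $(s_1,s_2)$ is in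 case 3 if $(s_1,s_2)\notin\mathcal R$ and $V_1(s_1)=V_2(s_2)$. For such a pair and $e\in A$: $e\in B_a(s_1,s_2)$ iff some $\phi_1$ has $L_1(s_1,e,\phi_1)=\top$ and $L_2(s_2,e,\cdot)\equiv\bot$; $e\in B_b$ iff some $\phi_1$ has $L_1(s_1,e,\phi_1)=?$ and $L_2(s_2,e,\cdot)\equiv\bot$; $e\in B_c$ iff some $\phi_1$ has $L_1(s_1,e,\phi_1)\in\{?,\top\}$, some $\phi_2$ has $L_2(s_2,e,\phi_2)=?$, and some $\mu\in Sat(\phi_1)$ has $\mu\not\Subset_{\mathcal R}\mu'$ for all $\mu'\in Sat(\phi_2)$; $e\in B_d$ iff some $\phi_2$ has $L_2(s_2,e,\phi_2)=\top$ and $L_1(s_1,e,\cdot)\equiv\bot$; $e\in B_e$ iff some $\phi_2$ has $L_2(s_2,e,\phi_2)=\top$ and some $\phi_1$ has $L_1(s_1,e,\phi_1)=?$; $e\in B_f$ iff some $\phi_2$ has $L_2(s_2,e,\phi_2)=\top$, some $\phi_1$ has $L_1(s_1,e,\phi_1)=\top$, and some $\mu\in Sat(\phi_1)$ has $\mu\not\Subset_{\mathcal R}\mu'$ for all $\mu'\in Sat(\phi_2)$. Breaking set: for $(s_1,s_2)$ with $V_1(s_1)=V_2(s_2)$ and $\mathrm{ind}_{\mathcal R}(s_1,s_2)=k<\mathrm{ind}(\mathcal R)$, $\mathrm{Breaking}(s_1,s_2)$ is the set of $a\in A$ such that $a\in B_a(s_1,s_2)\cup B_b(s_1,s_2)\cup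 B_d(s_1,s_2)\cup B_e(s_1,s_2)$, or there exist $\phi_1\in C(S_1)$, $\phi_2\in C(S_2)$, $\mu_1\in Sat(\phi_1)$ with $L_1(s_1,a,\phi_1)\ne\bot$, $L_2(s_2,a,\phi_2)\ne\bot$ and $\mu_1\not\Subset_{\mathcal R_k}\mu_2$ for all $\mu_2\in Sat(\phi_2)$. *)

theory Defs
  imports Complex_Main
begin

text \<open>Transition modalities: Must = top, May = ?, No = bot.\<close>
datatype tv = Must | May | No

text \<open>States are the universe of a finite type 's, actions the universe of a
  finite type 'a, atomic propositions a finite type 'p. Constraints are elements of a
  type 'c (this type plays the role of C(S)); apa_Sat gives Sat(phi).\<close>
record ('s, 'a, 'c, 'p) apa =
  apa_L   :: "'s \<Rightarrow> 'a \<Rightarrow> 'c \<Rightarrow> tv"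
  apa_V   :: "'s \<Rightarrow> 'p set set"
  apa_S0  :: "'s set"
  apa_Sat :: "'c \<Rightarrow> ('s \<Rightarrow> real) set"

definition is_dist :: "('s::finite \<Rightarrow> real) \<Rightarrow> bool" where
  "is_dist \<mu> \<longleftrightarrow> (\<forall>s. 0 \<le> \<mu> s) \<and> (\<Sum>s\<in>UNIV. \<mu> s) = 1"

definition apa_wf :: "('s::finite, 'a, 'c, 'p) apa \<Rightarrow> bool" where
  "apa_wf N \<longleftrightarrow> (\<forall>\<phi>. apa_Sat N \<phi> \<subseteq> {\<mu>. is_dist \<mu>})"

definition svnf :: "('s, 'a, 'c, 'p) apa \<Rightarrow> bool" where
  "svnf N \<longleftrightarrow> (\<forall>s. card (apa_V N s) \<le> 1)"

definition deterministic :: "('s, 'a, 'c, 'p) apa \<Rightarrow> bool" where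
  "deterministic N \<longleftrightarrow>
     (\<exists>s0. apa_S0 N = {s0}) \<and>
     (\<forall>s a \<phi> \<phi>'. apa_L N s a \<phi> \<noteq> No \<longrightarrow> apa_L N s a \<phi>' \<noteq> No \<longrightarrow> \<phi> = \<phi>') \<and>
     (\<forall>s a \<phi> s' s''. apa_L N s a \<phi> \<noteq> No \<longrightarrow> s' \<noteq> s'' \<longrightarrow>
        apa_V N s' \<inter> apa_V N s'' \<noteq> {} \<longrightarrow>
        \<not> (\<exists>\<mu>\<in>apa_Sat N \<phi>. \<exists>\<mu>'\<in>apa_Sat N \<phi>. \<mu> s' > 0 \<and> \<mu>' s'' > 0))"

definition wsub :: "('s1 \<times> 's2::finite) set \<Rightarrow> ('s1::finite \<Rightarrow> real) \<Rightarrow> ('s2 \<Rightarrow> real) \<Rightarrow> bool" where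
  "wsub Q \<mu> \<mu>' \<longleftrightarrow> (\<exists>\<delta> :: 's1 \<Rightarrow> 's2 \<Rightarrow> real.
      (\<forall>s s'. 0 \<le> \<delta> s s' \<and> \<delta> s s' \<le> 1) \<and>
      (\<forall>s. \<mu> s > 0 \<longrightarrow> is_dist (\<delta> s)) \<and>
      (\<forall>s'. (\<Sum>s\<in>UNIV. \<mu> s * \<delta> s s') = \<mu>' s') \<and>
      (\<forall>s s'. \<delta> s s' > 0 \<longrightarrow> (s, s') \<in> Q))"

definition ref_cond ::
  "('s1::finite, 'a, 'c1, 'p) apa \<Rightarrow> ('s2::finite, 'a, 'c2, 'p) apa \<Rightarrow> ('s1 \<times> 's2) set
     \<Rightarrow> 's1 \<Rightarrow> 's2 \<Rightarrow> bool" where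
  "ref_cond N1 N2 Q s1 s2 \<longleftrightarrow>
     apa_V N1 s1 \<subseteq> apa_V N2 s2 \<and>
     (\<forall>a \<phi>2. apa_L N2 s2 a \<phi>2 = Must \<longrightarrow>
        (\<exists>\<phi>1. apa_L N1 s1 a \<phi>1 = Must \<and>
           (\<forall>\<mu>1\<in>apa_Sat N1 \<phi>1. \<exists>\<mu>2\<in>apa_Sat N2 \<phi>2. wsub Q \<mu>1 \<mu>2))) \<and>
     (\<forall>a \<phi>1. apa_L N1 s1 a \<phi>1 \<noteq> No \<longrightarrow>
        (\<exists>\<phi>2. apa_L N2 s2 a \<phi>2 \<noteq> No \<and>
           (\<forall>\<mu>1\<in>apa_Sat N1 \<phi>1. \<exists>\<mu>2\<in>apa_Sat N2 \<phi>2. wsub Q \<mu>1 \<mu>2)))"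

definition refinement_rel ::
  "('s1::finite, 'a, 'c1, 'p) apa \<Rightarrow> ('s2::finite, 'a, 'c2, 'p) apa \<Rightarrow> ('s1 \<times> 's2) set \<Rightarrow> bool" where
  "refinement_rel N1 N2 Q \<longleftrightarrow> (\<forall>(s1, s2)\<in>Q. ref_cond N1 N2 Q s1 s2)"

definition refines ::
  "('s1::finite, 'a, 'c1, 'p) apa \<Rightarrow> ('s2::finite, 'a, 'c2, 'p) apa \<Rightarrow> bool" where
  "refines N1 N2 \<longleftrightarrow> (\<exists>Q. refinement_rel N1 N2 Q \<and>
      (\<forall>s1\<in>apa_S0 N1. \<exists>s2\<in>apa_S0 N2. (s1, s2) \<in> Q))"

definition max_ref ::
  "('s1::finite, 'a, 'c1, 'p) apa \<Rightarrow> ('s2::finite, 'a, 'c2, 'p) apa \<Rightarrow> ('s1 \<times> 's2) set" where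
  "max_ref N1 N2 = \<Union>{Q. refinement_rel N1 N2 Q}"

fun Rk ::
  "('s1::finite, 'a, 'c1, 'p) apa \<Rightarrow> ('s2::finite, 'a, 'c2, 'p) apa \<Rightarrow> nat \<Rightarrow> ('s1 \<times> 's2) set" where
  "Rk N1 N2 0 = UNIV"
| "Rk N1 N2 (Suc k) = {(s1, s2) \<in> Rk N1 N2 k. ref_cond N1 N2 (Rk N1 N2 k) s1 s2}"

definition indR ::
  "('s1::finite, 'a, 'c1, 'p) apa \<Rightarrow> ('s2::finite, 'a, 'c2, 'p) apa \<Rightarrow> nat" where
  "indR N1 N2 = (LEAST k. Rk N1 N2 (Suc k) = Rk N1 N2 k)"

text \<open>ind_R(s1,s2) = min(max{k | (s1,s2) in R_k}, ind(R)); if the pair is in every R_k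
  the maximum is infinite and the value is ind(R).\<close>
definition ind_pair ::
  "('s1::finite, 'a, 'c1, 'p) apa \<Rightarrow> ('s2::finite, 'a, 'c2, 'p) apa \<Rightarrow> 's1 \<Rightarrow> 's2 \<Rightarrow> nat" where
  "ind_pair N1 N2 s1 s2 =
     (if \<forall>k. (s1, s2) \<in> Rk N1 N2 k then indR N1 N2
      else min (GREATEST k. (s1, s2) \<in> Rk N1 N2 k) (indR N1 N2))"

definition case3 ::
  "('s1::finite, 'a, 'c1, 'p) apa \<Rightarrow> ('s2::finite, 'a, 'c2, 'p) apa \<Rightarrow> 's1 \<Rightarrow> 's2 \<Rightarrow> bool" where
  "case3 N1 N2 s1 s2 \<longleftrightarrow> (s1, s2) \<notin> max_ref N1 N2 \<and> apa_V N1 s1 = apa_V N2 s2"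

definition Bc ::
  "('s1::finite, 'a, 'c1, 'p) apa \<Rightarrow> ('s2::finite, 'a, 'c2, 'p) apa \<Rightarrow> 's1 \<Rightarrow> 's2 \<Rightarrow> 'a set" where
  "Bc N1 N2 s1 s2 = {e. \<exists>\<phi>1 \<phi>2. apa_L N1 s1 e \<phi>1 \<in> {May, Must} \<and> apa_L N2 s2 e \<phi>2 = May \<and>
      (\<exists>\<mu>\<in>apa_Sat N1 \<phi>1. \<forall>\<mu>'\<in>apa_Sat N2 \<phi>2. \<not> wsub (max_ref N1 N2) \<mu> \<mu>')}"

definition Bf ::
  "('s1::finite, 'a, 'c1, 'p) apa \<Rightarrow> ('s2::finite, 'a, 'c2, 'p) apa \<Rightarrow> 's1 \<Rightarrow> 's2 \<Rightarrow> 'a set" where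
  "Bf N1 N2 s1 s2 = {e. \<exists>\<phi>1 \<phi>2. apa_L N2 s2 e \<phi>2 = Must \<and> apa_L N1 s1 e \<phi>1 = Must \<and>
      (\<exists>\<mu>\<in>apa_Sat N1 \<phi>1. \<forall>\<mu>'\<in>apa_Sat N2 \<phi>2. \<not> wsub (max_ref N1 N2) \<mu> \<mu>')}"

definition Ba ::
  "('s1::finite, 'a, 'c1, 'p) apa \<Rightarrow> ('s2::finite, 'a, 'c2, 'p) apa \<Rightarrow> 's1 \<Rightarrow> 's2 \<Rightarrow> 'a set" where
  "Ba N1 N2 s1 s2 = {e. (\<exists>\<phi>1. apa_L N1 s1 e \<phi>1 = Must) \<and> (\<forall>\<phi>2. apa_L N2 s2 e \<phi>2 = No)}"

definition Bb ::
  "('s1::finite, 'a, 'c1, 'p) apa \<Rightarrow> ('s2::finite, 'a, 'c2, 'p) apa \<Rightarrow> 's1 \<Rightarrow> 's2 \<Rightarrow> 'a set" where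
  "Bb N1 N2 s1 s2 = {e. (\<exists>\<phi>1. apa_L N1 s1 e \<phi>1 = May) \<and> (\<forall>\<phi>2. apa_L N2 s2 e \<phi>2 = No)}"

definition Bd ::
  "('s1::finite, 'a, 'c1, 'p) apa \<Rightarrow> ('s2::finite, 'a, 'c2, 'p) apa \<Rightarrow> 's1 \<Rightarrow> 's2 \<Rightarrow> 'a set" where
  "Bd N1 N2 s1 s2 = {e. (\<exists>\<phi>2. apa_L N2 s2 e \<phi>2 = Must) \<and> (\<forall>\<phi>1. apa_L N1 s1 e \<phi>1 = No)}"

definition Be ::
  "('s1::finite, 'a, 'c1, 'p) apa \<Rightarrow> ('s2::finite, 'a, 'c2, 'p) apa \<Rightarrow> 's1 \<Rightarrow> 's2 \<Rightarrow> 'a set" where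
  "Be N1 N2 s1 s2 = {e. (\<exists>\<phi>2. apa_L N2 s2 e \<phi>2 = Must) \<and> (\<exists>\<phi>1. apa_L N1 s1 e \<phi>1 = May)}"

text \<open>Breaking(s1,s2); only defined (nonempty) for pairs with V1(s1) = V2(s2) and
  ind_R(s1,s2) < ind(R).\<close>
definition Breaking ::
  "('s1::finite, 'a, 'c1, 'p) apa \<Rightarrow> ('s2::finite, 'a, 'c2, 'p) apa \<Rightarrow> 's1 \<Rightarrow> 's2 \<Rightarrow> 'a set" where
  "Breaking N1 N2 s1 s2 = {a.
     apa_V N1 s1 = apa_V N2 s2 \<and> ind_pair N1 N2 s1 s2 < indR N1 N2 \<and>
     (a \<in> Ba N1 N2 s1 s2 \<union> Bb N1 N2 s1 s2 \<union> Bd N1 N2 s1 s2 \<union> Be N1 N2 s1 s2 \<or>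
      (\<exists>\<phi>1 \<phi>2. \<exists>\<mu>1\<in>apa_Sat N1 \<phi>1. apa_L N1 s1 a \<phi>1 \<noteq> No \<and> apa_L N2 s2 a \<phi>2 \<noteq> No \<and>
         (\<forall>\<mu>2\<in>apa_Sat N2 \<phi>2. \<not> wsub (Rk N1 N2 (ind_pair N1 N2 s1 s2)) \<mu>1 \<mu>2)))}"

definition succ_v :: "('s, 'a, 'c, 'p) apa \<Rightarrow> 's \<Rightarrow> 'a \<Rightarrow> 'p set \<Rightarrow> 's set" where
  "succ_v N s a v = {s'. apa_V N s' = {v} \<and>
      (\<exists>\<phi>. \<exists>\<mu>\<in>apa_Sat N \<phi>. apa_L N s a \<phi> \<noteq> No \<and> \<mu> s' > 0)}"

text \<open>For deterministic N2 this set has at most one element; "succ = s2'" is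
  rendered as "succ = {s2'}" and "succ = \<emptyset>" as "succ = {}".\<close>
definition succ_st ::
  "('s1, 'a, 'c1, 'p) apa \<Rightarrow> ('s2, 'a, 'c2, 'p) apa \<Rightarrow> 's2 \<Rightarrow> 'a \<Rightarrow> 's1 \<Rightarrow> 's2 set" where
  "succ_st N1 N2 s2 e s1' = {s2'. \<exists>v. apa_V N1 s1' = {v} \<and> s2' \<in> succ_v N2 s2 e v}"

end

theory Submission
  imports Defs
begin

text \<open>If none of the three alternatives held, every state in the support of mu1 would have
  a unique e-successor below s2 to which it is related in R_k, where k is the index of (s1, s2).
  Moving each state to its successor with probability one then witnesses that mu1 is matched in
  R_k by its image measure, which lies in Sat(phi2).  But as e is in B_c or B_f and both APAs
  are deterministic, e lies in none of B_a, B_b, B_d, B_e, so membership in Breaking(s1, s2)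
  provides precisely a distribution mu1 with no such match.\<close>

lemma Rk_antimono: "i \<le> j \<Longrightarrow> Rk N1 N2 j \<subseteq> Rk N1 N2 i"
proof (induction j)
  case 0
  then show ?case by simp
next
  case (Suc j)
  then show ?case by (cases "i = Suc j") auto
qed

lemma mem_Rk_if_le_ind_pair:
  assumes "k \<le> ind_pair N1 N2 s1 s2"
  shows "(s1, s2) \<in> Rk N1 N2 k"
proof (cases "\<forall>k. (s1, s2) \<in> Rk N1 N2 k")
  case True
  then show ?thesis by blast
next
  case False
  then obtain m where m: "(s1, s2) \<notin> Rk N1 N2 m" by blast
  have bounded: "(s1, s2) \<in> Rk N1 N2 y \<Longrightarrow> y \<le> m" for y
    using Rk_antimono[of m y N1 N2] m by (meson nat_le_linear subsetD)
  let ?G = "GREATEST k. (s1, s2) \<in> Rk N1 N2 k"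
  have "(s1, s2) \<in> Rk N1 N2 ?G"
    by (rule GreatestI_nat[where P = "\<lambda>k. (s1, s2) \<in> Rk N1 N2 k" and k = 0]) (use bounded in auto)
  moreover have "k \<le> ?G"
    using assms False unfolding ind_pair_def by simp
  ultimately show ?thesis
    using Rk_antimono[of k ?G N1 N2] by blast
qed

lemma deterministic_unique_constraint:
  "deterministic N \<Longrightarrow> apa_L N s a \<phi> \<noteq> No \<Longrightarrow> apa_L N s a \<phi>' \<noteq> No \<Longrightarrow> \<phi> = \<phi>'"
  unfolding deterministic_def by blast

lemma deterministic_succ_st_unique:
  assumes "deterministic N2"
    and "t \<in> succ_st N1 N2 s2 e s" and "t' \<in> succ_st N1 N2 s2 e s"
  shows "t = t'"
proof (rule ccontr)
  assume "t \<noteq> t'"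
  obtain v where "apa_V N1 s = {v}" and t: "t \<in> succ_v N2 s2 e v" and t': "t' \<in> succ_v N2 s2 e v"
    using assms(2,3) unfolding succ_st_def by auto
  obtain \<phi> \<mu> where "apa_V N2 t = {v}" "\<mu> \<in> apa_Sat N2 \<phi>" "apa_L N2 s2 e \<phi> \<noteq> No" "\<mu> t > 0"
    using t unfolding succ_v_def by auto
  moreover obtain \<phi>' \<mu>' where "apa_V N2 t' = {v}" "\<mu>' \<in> apa_Sat N2 \<phi>'" "apa_L N2 s2 e \<phi>' \<noteq> No"
      "\<mu>' t' > 0"
    using t' unfolding succ_v_def by auto
  moreover have "\<phi> = \<phi>'"
    using deterministic_unique_constraint[OF assms(1)] calculation by blast
  ultimately show False
    using assms(1) \<open>t \<noteq> t'\<close> unfolding deterministic_def by blast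
qed

lemma wsub_image_measure:
  fixes \<mu> :: "'s1::finite \<Rightarrow> real" and g :: "'s1 \<Rightarrow> 's2::finite set"
  assumes nonneg: "\<And>s. 0 \<le> \<mu> s"
    and respects: "\<And>s. \<mu> s > 0 \<Longrightarrow> \<exists>t. g s = {t} \<and> (s, t) \<in> Q"
  shows "wsub Q \<mu> (\<lambda>t. \<Sum>s\<in>{s. g s = {t}}. \<mu> s)"
proof -
  define \<delta> where "\<delta> = (\<lambda>s t. if \<mu> s > 0 \<and> g s = {t} then (1::real) else 0)"
  show ?thesis
    unfolding wsub_def
  proof (intro exI[of _ \<delta>] conjI allI impI)
    fix s t
    show "0 \<le> \<delta> s t" "\<delta> s t \<le> 1" unfolding \<delta>_def by simp_all
  next
    fix s
    assume pos: "\<mu> s > 0"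
    then obtain t where t: "g s = {t}" using respects by blast
    have "\<delta> s = (\<lambda>t'. if t' = t then 1 else 0)"
      by (simp add: \<delta>_def pos t fun_eq_iff)
    then show "is_dist (\<delta> s)" unfolding is_dist_def by simp
  next
    fix t
    have "(\<Sum>s\<in>UNIV. \<mu> s * \<delta> s t) = (\<Sum>s\<in>UNIV. if g s = {t} then \<mu> s else 0)"
      by (rule sum.cong) (use nonneg in \<open>auto simp: \<delta>_def less_eq_real_def\<close>)
    also have "\<dots> = (\<Sum>s\<in>{s. g s = {t}}. \<mu> s)"
      by (simp add: sum.If_cases)
    finally show "(\<Sum>s\<in>UNIV. \<mu> s * \<delta> s t) = (\<Sum>s\<in>{s. g s = {t}}. \<mu> s)" .
  next
    fix s t
    assume "\<delta> s t > 0"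
    then show "(s, t) \<in> Q"
      using respects by (fastforce simp: \<delta>_def split: if_splits)
  qed
qed

lemma wsub_Rk_succ_image:
  assumes "deterministic N2" and nonneg: "\<And>s. 0 \<le> \<mu> s"
    and total: "\<And>s. \<mu> s > 0 \<Longrightarrow> succ_st N1 N2 s2 e s \<noteq> {}"
    and not_earlier: "\<And>s t. \<mu> s > 0 \<Longrightarrow> succ_st N1 N2 s2 e s = {t} \<Longrightarrow> k \<le> ind_pair N1 N2 s t"
  shows "wsub (Rk N1 N2 k) \<mu> (\<lambda>t. \<Sum>s\<in>{s. succ_st N1 N2 s2 e s = {t}}. \<mu> s)"
proof (rule wsub_image_measure[OF nonneg])
  fix s
  assume pos: "\<mu> s > 0"
  then obtain t where "t \<in> succ_st N1 N2 s2 e s" using total by blast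
  then have "succ_st N1 N2 s2 e s = {t}" by (auto dest: deterministic_succ_st_unique[OF assms(1)])
  then show "\<exists>t. succ_st N1 N2 s2 e s = {t} \<and> (s, t) \<in> Rk N1 N2 k"
    using not_earlier[OF pos] mem_Rk_if_le_ind_pair by blast
qed

lemma Bc_Bf_disjoint_Ba_Bb_Bd_Be:
  fixes N1 :: "('s1::finite, 'a, 'c1, 'p) apa" and N2 :: "('s2::finite, 'a, 'c2, 'p) apa"
  assumes "deterministic N1" and "deterministic N2"
    and "e \<in> Bc N1 N2 s1 s2 \<union> Bf N1 N2 s1 s2"
  shows "e \<notin> Ba N1 N2 s1 s2 \<union> Bb N1 N2 s1 s2 \<union> Bd N1 N2 s1 s2 \<union> Be N1 N2 s1 s2"
proof -
  have "\<exists>\<phi>1 \<phi>2. apa_L N1 s1 e \<phi>1 \<noteq> No \<and> apa_L N2 s2 e \<phi>2 \<noteq> No \<and>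
      (apa_L N2 s2 e \<phi>2 = May \<or> apa_L N1 s1 e \<phi>1 = Must)"
    using assms(3) unfolding Bc_def Bf_def by (auto; metis tv.distinct)
  then obtain \<phi>1 \<phi>2 where L1: "apa_L N1 s1 e \<phi>1 \<noteq> No" and L2: "apa_L N2 s2 e \<phi>2 \<noteq> No"
    and modal: "apa_L N2 s2 e \<phi>2 = May \<or> apa_L N1 s1 e \<phi>1 = Must"
    by blast
  have "e \<notin> Be N1 N2 s1 s2"
  proof
    assume "e \<in> Be N1 N2 s1 s2"
    then obtain \<psi>1 \<psi>2 where \<psi>2: "apa_L N2 s2 e \<psi>2 = Must" and \<psi>1: "apa_L N1 s1 e \<psi>1 = May"
      unfolding Be_def by blast
    have "\<psi>1 = \<phi>1"
      by (rule deterministic_unique_constraint[OF assms(1) _ L1]) (simp add: \<psi>1)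
    moreover have "\<psi>2 = \<phi>2"
      by (rule deterministic_unique_constraint[OF assms(2) _ L2]) (simp add: \<psi>2)
    ultimately show False
      using modal \<psi>1 \<psi>2 by simp
  qed
  then show ?thesis
    using L1 L2 unfolding Ba_def Bb_def Bd_def by auto
qed

lemma Breaking_unmatched_distribution:
  assumes "deterministic N1" and "deterministic N2"
    and "e \<in> (Bc N1 N2 s1 s2 \<union> Bf N1 N2 s1 s2) \<inter> Breaking N1 N2 s1 s2"
  obtains \<phi>1 \<phi>2 \<mu>1 where "apa_L N1 s1 e \<phi>1 \<noteq> No" "apa_L N2 s2 e \<phi>2 \<noteq> No" "\<mu>1 \<in> apa_Sat N1 \<phi>1"
    "\<forall>\<mu>2\<in>apa_Sat N2 \<phi>2. \<not> wsub (Rk N1 N2 (ind_pair N1 N2 s1 s2)) \<mu>1 \<mu>2"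
  using assms Bc_Bf_disjoint_Ba_Bb_Bd_Be[OF assms(1,2)] unfolding Breaking_def by blast

theorem lemma5p1:
  fixes N1 :: "('s1::finite, 'a::finite, 'c1, 'p::finite) apa"
    and N2 :: "('s2::finite, 'a, 'c2, 'p) apa"
    and s1 :: 's1 and s2 :: 's2 and e :: 'a
  assumes "apa_wf N1" and "apa_wf N2"
    and "deterministic N1" and "deterministic N2"
    and "svnf N1" and "svnf N2"
    and "\<not> refines N1 N2"
    and "case3 N1 N2 s1 s2"
    and "e \<in> (Bc N1 N2 s1 s2 \<union> Bf N1 N2 s1 s2) \<inter> Breaking N1 N2 s1 s2"
  shows "\<exists>\<phi>1 \<phi>2 \<mu>1. apa_L N1 s1 e \<phi>1 \<noteq> No \<and> apa_L N2 s2 e \<phi>2 \<noteq> No \<and> \<mu>1 \<in> apa_Sat N1 \<phi>1 \<and>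
     ((\<exists>s1'. \<mu>1 s1' > 0 \<and> succ_st N1 N2 s2 e s1' = {}) \<or>
      (\<lambda>s2'. \<Sum>s1'\<in>{s1'. succ_st N1 N2 s2 e s1' = {s2'}}. \<mu>1 s1') \<notin> apa_Sat N2 \<phi>2 \<or>
      (\<exists>s1' s2'. \<mu>1 s1' > 0 \<and> succ_st N1 N2 s2 e s1' = {s2'} \<and>
         ind_pair N1 N2 s1' s2' < ind_pair N1 N2 s1 s2))"
proof -
  let ?succ = "succ_st N1 N2 s2 e" and ?k = "ind_pair N1 N2 s1 s2"
  obtain \<phi>1 \<phi>2 \<mu>1 where L: "apa_L N1 s1 e \<phi>1 \<noteq> No" "apa_L N2 s2 e \<phi>2 \<noteq> No"
    and \<mu>1: "\<mu>1 \<in> apa_Sat N1 \<phi>1"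
    and unmatched: "\<forall>\<mu>2\<in>apa_Sat N2 \<phi>2. \<not> wsub (Rk N1 N2 ?k) \<mu>1 \<mu>2"
    using Breaking_unmatched_distribution[OF assms(3,4,9)] by blast
  have nonneg: "0 \<le> \<mu>1 s" for s
    using assms(1) \<mu>1 unfolding apa_wf_def is_dist_def by blast
  have "(\<exists>s. \<mu>1 s > 0 \<and> ?succ s = {}) \<or>
      (\<lambda>t. \<Sum>s\<in>{s. ?succ s = {t}}. \<mu>1 s) \<notin> apa_Sat N2 \<phi>2 \<or>
      (\<exists>s t. \<mu>1 s > 0 \<and> ?succ s = {t} \<and> ind_pair N1 N2 s t < ?k)"
  proof (rule ccontr)
    assume "\<not> ?thesis"
    then have "wsub (Rk N1 N2 ?k) \<mu>1 (\<lambda>t. \<Sum>s\<in>{s. ?succ s = {t}}. \<mu>1 s)"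
      and "(\<lambda>t. \<Sum>s\<in>{s. ?succ s = {t}}. \<mu>1 s) \<in> apa_Sat N2 \<phi>2"
      by (auto intro!: wsub_Rk_succ_image[OF assms(4) nonneg])
    then show False
      using unmatched by blast
  qed
  then show ?thesis
    using L \<mu>1 by blast
qed

end
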